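(* In the setting of the context, assume $q<q_c$, that $B$ is invertible (so $m=n$), and that $A$ is invertible. Then the stability threshold satisfies $$\bar\delta(q)\ge\lambda_{\min}\{\Xi(A^\top PA)^{-1}\Xi\},$$ where $\Xi=(Q+(1-q)c_2A^\top P_0^2A)^{1/2}$, $c_2=\dfrac{\lambda_{\min}(R)\lambda_{\min}(BB^\top)}{\lambda_{\max}(R+B^\top PB)^2}$, $P$ is the positive definite solution of the modified Riccati equation with parameter $q$ and $P_0$ that with parameter $0$.
   Context: Let $A\in\mathbb{R}^{n\times n}$, $B\in\mathbb{R}^{n\times m}$ with $(A,B)$ stabilizable, and let $Q$, $R$ be symmetric positive definite. Let $q\in(0,1)$ be the loss probability of $x_{t+1}=Ax_t+\lambda_tBu_t$ with i.i.d. $\lambda_t$, $\mathcal P(\lambda_t=0)=q$. For $p\in[0,1)$ the modified Riccati equation with parameter $p$ is $X=Q+A^\top XA-(1-p)A^\top XB(R+B^\top XB)^{-1}B^\top XA$; $q_c$ is the critical loss probability such that for every $p\in[0,q_c)$ this equation has a unique positive definite solution. For $\hat q\in[0,q_c)$ let $\hat P$ be the positive definite solution for parameter $\hat q$ and $\hat K=-(R+B^\top\hat PB)^{-1}B^\top\hat PA$. Define $\mathcal C(q,\hat q)=Q+(1-q)\hat K^\top R\hat K-(q-\hat q)A^\top\hat PB(R+B^\top\hat PB)^{-1}B^\top\hat PA$ and the stability threshold $\bar\delta(q)=\sup\{\delta\ge0:\ \mathcal C(q,\hat q)\succ0 \text{ for all } \hat q\in[0,q_c)\text{ with } q-\hat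 q<\delta\}$ (possibly $+\infty$). *)

theory Defs
  imports "HOL-Analysis.Analysis"
begin

type_synonym 'n sqmat = "real ^ 'n ^ 'n"

definition pos_def :: "'n::finite sqmat \<Rightarrow> bool" where
  "pos_def M \<longleftrightarrow> transpose M = M \<and> (\<forall>x. x \<noteq> 0 \<longrightarrow> 0 < x \<bullet> (M *v x))"

definition pos_semidef :: "'n::finite sqmat \<Rightarrow> bool" where
  "pos_semidef M \<longleftrightarrow> transpose M = M \<and> (\<forall>x. 0 \<le> x \<bullet> (M *v x))"

definition is_eigenvalue :: "'n::finite sqmat \<Rightarrow> real \<Rightarrow> bool" where
  "is_eigenvalue M l \<longleftrightarrow> (\<exists>v. v \<noteq> 0 \<and> M *v v = l *\<^sub>R v)"

definition lambda_min :: "'n::finite sqmat \<Rightarrow> real" where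
  "lambda_min M = Min {l. is_eigenvalue M l}"

definition lambda_max :: "'n::finite sqmat \<Rightarrow> real" where
  "lambda_max M = Max {l. is_eigenvalue M l}"

definition msqrt :: "'n::finite sqmat \<Rightarrow> 'n sqmat" where
  "msqrt M = (THE S. pos_semidef S \<and> S ** S = M)"

fun mpow :: "'n::finite sqmat \<Rightarrow> nat \<Rightarrow> 'n sqmat" where
  "mpow M 0 = mat 1"
| "mpow M (Suc k) = M ** mpow M k"

definition stabilizable :: "('n::finite sqmat) \<Rightarrow> real ^ 'm::finite ^ 'n \<Rightarrow> bool" where
  "stabilizable A B \<longleftrightarrow> (\<exists>K :: real ^ 'n ^ 'm. (\<lambda>k. mpow (A + B ** K) k) \<longlonglongrightarrow> 0)"

definition mare :: "'n::finite sqmat \<Rightarrow> real ^ 'm::finite ^ 'n \<Rightarrow> 'n sqmat \<Rightarrow> real ^ 'm ^ 'm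
    \<Rightarrow> real \<Rightarrow> 'n sqmat \<Rightarrow> bool" where
  "mare A B Q R p X \<longleftrightarrow>
     X = Q + transpose A ** X ** A
         - (1 - p) *\<^sub>R (transpose A ** X ** B ** matrix_inv (R + transpose B ** X ** B)
                         ** transpose B ** X ** A)"

definition q_crit :: "'n::finite sqmat \<Rightarrow> real ^ 'm::finite ^ 'n \<Rightarrow> 'n sqmat \<Rightarrow> real ^ 'm ^ 'm \<Rightarrow> real" where
  "q_crit A B Q R = Sup {c. 0 \<le> c \<and> c \<le> 1 \<and>
      (\<forall>p. 0 \<le> p \<and> p < c \<longrightarrow> (\<exists>!X. pos_def X \<and> mare A B Q R p X))}"

definition Psol :: "'n::finite sqmat \<Rightarrow> real ^ 'm::finite ^ 'n \<Rightarrow> 'n sqmat \<Rightarrow> real ^ 'm ^ 'm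
    \<Rightarrow> real \<Rightarrow> 'n sqmat" where
  "Psol A B Q R p = (THE X. pos_def X \<and> mare A B Q R p X)"

definition Kgain :: "'n::finite sqmat \<Rightarrow> real ^ 'm::finite ^ 'n \<Rightarrow> 'n sqmat \<Rightarrow> real ^ 'm ^ 'm
    \<Rightarrow> real \<Rightarrow> real ^ 'n ^ 'm" where
  "Kgain A B Q R p = (let P = Psol A B Q R p in
      - (matrix_inv (R + transpose B ** P ** B) ** transpose B ** P ** A))"

definition Cmat :: "'n::finite sqmat \<Rightarrow> real ^ 'm::finite ^ 'n \<Rightarrow> 'n sqmat \<Rightarrow> real ^ 'm ^ 'm
    \<Rightarrow> real \<Rightarrow> real \<Rightarrow> 'n sqmat" where
  "Cmat A B Q R q qh = (let P = Psol A B Q R qh; K = Kgain A B Q R qh in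
      Q + (1 - q) *\<^sub>R (transpose K ** R ** K)
        - (q - qh) *\<^sub>R (transpose A ** P ** B ** matrix_inv (R + transpose B ** P ** B)
                          ** transpose B ** P ** A))"

definition delta_bar :: "'n::finite sqmat \<Rightarrow> real ^ 'm::finite ^ 'n \<Rightarrow> 'n sqmat \<Rightarrow> real ^ 'm ^ 'm
    \<Rightarrow> real \<Rightarrow> ereal" where
  "delta_bar A B Q R q = Sup {ereal d | d. 0 \<le> d \<and>
      (\<forall>qh. 0 \<le> qh \<and> qh < q_crit A B Q R \<and> q - qh < d \<longrightarrow> pos_def (Cmat A B Q R q qh))}"

end

theory Submission
  imports Defs
begin

(*
  Write M[x] for the quadratic form x' M x.  For x ~= 0 let Ph be the Riccati solution for the
  parameter qh, S = R + B' Ph B and k = S^-1 B' Ph A x; then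
  C(q,qh)[x] = Q[x] + (1 - q) R[k] - (q - qh) S[k], so only qh < q needs work.  Completing the square
  gives S[k] <= Ph[A x], and a comparison principle for the modified Riccati operator shows that the
  solution increases with the loss probability; hence S[k] <= P[A x] and
  lambda_min(R) S[k] <= Lambda R[k] with Lambda = lambda_max(R + B' P B).  On the other side, with
  lambda the claimed bound and G = A' P A one has lambda G <= Xi^2, and P0 <= P together with
  lambda_min(B B') lambda_max(P) <= Lambda controls the second summand of Xi^2, which yields
  lambda P[A x] <= Q[x] + (1 - q) lambda_min(R) P[A x] / Lambda.  Eliminating P[A x] gives
  lambda S[k] <= Q[x] + (1 - q) R[k], so C(q,qh) is positive definite whenever q - qh < lambda.
*)

section \<open>Quadratic forms and definiteness\<close>

definition quad_form :: "real^'n::finite^'n \<Rightarrow> real^'n \<Rightarrow> real" where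
  "quad_form M x = x \<bullet> (M *v x)"

lemma inner_transpose_right: "(x::real^'n::finite) \<bullet> (transpose A *v y) = (A *v x) \<bullet> y"
  by (metis dot_lmul_matrix inner_commute transpose_matrix_vector)

lemma inner_vector_matrix_mult: "(x::real^'n::finite) \<bullet> (y v* A) = (A *v x) \<bullet> y"
  using inner_transpose_right[of x A y] by simp

lemma inner_symmetric_matrix:
  "transpose M = M \<Longrightarrow> (x::real^'n::finite) \<bullet> (M *v y) = (M *v x) \<bullet> y"
  using inner_transpose_right[of x M y] by simp

lemma transpose_add: "transpose (A + B) = transpose A + transpose (B::real^'n::finite^'m::finite)"
  by (simp add: transpose_def vec_eq_iff)

lemma transpose_diff: "transpose (A - B) = transpose A - transpose (B::real^'n::finite^'m::finite)"
  by (simp add: transpose_def vec_eq_iff)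

lemma transpose_uminus: "transpose (- A) = - transpose (A::real^'n::finite^'m::finite)"
  by (simp add: transpose_def vec_eq_iff)

lemma uminus_matrix_vector_mult: "(- A) *v x = - (A *v (x::real^'n::finite))"
  by (simp add: matrix_vector_mult_def vec_eq_iff sum_negf)

lemma matrix_inv_right: "invertible M \<Longrightarrow> M ** matrix_inv M = mat 1"
  and matrix_inv_left: "invertible M \<Longrightarrow> matrix_inv M ** M = mat 1"
  using someI_ex[of "\<lambda>N. M ** N = mat 1 \<and> N ** M = mat 1"] unfolding invertible_def matrix_inv_def
  by auto

lemma matrix_vector_mul_matrix_inv: "invertible M \<Longrightarrow> M *v (matrix_inv M *v x) = x"
  and matrix_inv_matrix_vector_mul: "invertible M \<Longrightarrow> matrix_inv M *v (M *v x) = x"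
  by (simp_all add: matrix_vector_mul_assoc matrix_inv_right matrix_inv_left)

lemma matrix_inv_unique:
  assumes "(M::real^'n::finite^'n) ** N = mat 1"
  shows "matrix_inv M = N"
proof -
  have "matrix_inv M = matrix_inv M ** (M ** N)"
    using assms by simp
  also have "\<dots> = (matrix_inv M ** M) ** N"
    by (simp add: matrix_mul_assoc)
  also have "\<dots> = N"
    using assms invertible_right_inverse matrix_inv_left by (metis matrix_mul_lid)
  finally show ?thesis .
qed

lemma symmetric_matrix_inv:
  assumes "invertible (M::real^'n::finite^'n)" "transpose M = M"
  shows "transpose (matrix_inv M) = matrix_inv M"
proof -
  have "M ** transpose (matrix_inv M) = mat 1"
    using arg_cong[OF matrix_inv_left[OF assms(1)], of transpose] assms(2)
    by (simp add: matrix_transpose_mul)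
  then show ?thesis
    using matrix_inv_unique by metis
qed

lemma invertible_matrix_vector_nonzero:
  "invertible (M::real^'n::finite^'n) \<Longrightarrow> x \<noteq> 0 \<Longrightarrow> M *v x \<noteq> 0"
  using matrix_inv_matrix_vector_mul[of M x] by force

lemma quad_form_add: "quad_form (M + N) x = quad_form M x + quad_form N x"
  by (simp add: quad_form_def matrix_vector_mult_add_rdistrib inner_add_right)

lemma quad_form_diff: "quad_form (M - N) x = quad_form M x - quad_form N x"
  by (simp add: quad_form_def matrix_vector_mult_diff_rdistrib inner_diff_right)

lemma quad_form_scaleR: "quad_form (c *\<^sub>R M) x = c * quad_form M x"
  by (simp add: quad_form_def scaleR_matrix_vector_assoc[symmetric])

lemma quad_form_uminus: "quad_form (- M) x = - quad_form M x"
  by (simp add: quad_form_def uminus_matrix_vector_mult)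

lemma quad_form_scaleR_vector: "quad_form M (c *\<^sub>R x) = c\<^sup>2 * quad_form M x"
  by (simp add: quad_form_def matrix_vector_mult_scaleR power2_eq_square)

lemma quad_form_uminus_vector [simp]: "quad_form M (- x) = quad_form M x"
  using quad_form_scaleR_vector[of M "-1" x] by simp

lemma quad_form_congruence: "quad_form (transpose A ** M ** A) x = quad_form M (A *v x)"
  by (simp add: quad_form_def matrix_vector_mul_assoc[symmetric] inner_vector_matrix_mult)

lemma quad_form_transpose_mult_self: "quad_form (transpose A ** A) x = (A *v x) \<bullet> (A *v x)"
  by (simp add: quad_form_def matrix_vector_mul_assoc[symmetric] inner_vector_matrix_mult)

lemma quad_form_add_vector:
  assumes "transpose M = M"
  shows "quad_form M (u + v) = quad_form M u + 2 * (u \<bullet> (M *v v)) + quad_form M v"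
  using inner_symmetric_matrix[OF assms, of v u]
  by (simp add: quad_form_def matrix_vector_right_distrib inner_add_left inner_add_right
      inner_commute)

lemma pos_def_iff_quad_form:
  "pos_def M \<longleftrightarrow> transpose M = M \<and> (\<forall>x. x \<noteq> 0 \<longrightarrow> 0 < quad_form M x)"
  by (simp add: pos_def_def quad_form_def)

lemma pos_semidef_iff_quad_form:
  "pos_semidef M \<longleftrightarrow> transpose M = M \<and> (\<forall>x. 0 \<le> quad_form M x)"
  by (simp add: pos_semidef_def quad_form_def)

lemma pos_def_symmetric: "pos_def M \<Longrightarrow> transpose M = M"
  and pos_def_quad_form_pos: "pos_def M \<Longrightarrow> x \<noteq> 0 \<Longrightarrow> 0 < quad_form M x"
  by (simp_all add: pos_def_iff_quad_form)

lemma pos_semidef_symmetric: "pos_semidef M \<Longrightarrow> transpose M = M"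
  and pos_semidef_quad_form_nonneg: "pos_semidef M \<Longrightarrow> 0 \<le> quad_form M x"
  by (simp_all add: pos_semidef_iff_quad_form)

lemma pos_def_imp_pos_semidef: "pos_def M \<Longrightarrow> pos_semidef M"
  unfolding pos_def_iff_quad_form pos_semidef_iff_quad_form
  by (metis less_le order_refl quad_form_def inner_zero_left)

lemma pos_def_invertible: "pos_def (M::real^'n::finite^'n) \<Longrightarrow> invertible M"
  by (metis invertible_left_inverse matrix_left_invertible_ker pos_def_quad_form_pos
      quad_form_def inner_zero_right less_irrefl)

lemma pos_def_add_pos_semidef: "pos_def M \<Longrightarrow> pos_semidef N \<Longrightarrow> pos_def (M + N)"
  by (simp add: pos_def_iff_quad_form pos_semidef_iff_quad_form transpose_add quad_form_add
      add_pos_nonneg)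

lemma pos_semidef_add: "pos_semidef M \<Longrightarrow> pos_semidef N \<Longrightarrow> pos_semidef (M + N)"
  by (simp add: pos_semidef_iff_quad_form transpose_add quad_form_add)

lemma pos_semidef_scaleR: "pos_semidef M \<Longrightarrow> 0 \<le> c \<Longrightarrow> pos_semidef (c *\<^sub>R M)"
  by (simp add: pos_semidef_iff_quad_form transpose_scalar quad_form_scaleR)

lemma pos_semidef_congruence: "pos_semidef M \<Longrightarrow> pos_semidef (transpose A ** M ** A)"
  by (simp add: pos_semidef_iff_quad_form quad_form_congruence matrix_transpose_mul
      matrix_mul_assoc)

lemma pos_def_add_congruence:
  "pos_def R \<Longrightarrow> pos_semidef X \<Longrightarrow> pos_def (R + transpose B ** X ** B)"
  by (simp add: pos_def_add_pos_semidef pos_semidef_congruence)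

lemma pos_def_congruence:
  "pos_def M \<Longrightarrow> invertible A \<Longrightarrow> pos_def (transpose A ** M ** (A::real^'n::finite^'n))"
  by (simp add: pos_def_iff_quad_form quad_form_congruence matrix_transpose_mul matrix_mul_assoc
      invertible_matrix_vector_nonzero)

lemma quad_form_matrix_inv:
  assumes "invertible (S::real^'n::finite^'n)" "transpose S = S"
  shows "w \<bullet> (matrix_inv S *v w) = quad_form S (matrix_inv S *v w)"
  using inner_symmetric_matrix[OF assms(2), of "matrix_inv S *v w" "matrix_inv S *v w"]
  by (simp add: quad_form_def matrix_vector_mul_matrix_inv[OF assms(1)] inner_commute)

lemma pos_def_matrix_inv:
  assumes "pos_def (M::real^'n::finite^'n)"
  shows "pos_def (matrix_inv M)"
proof -
  have M: "invertible M" "transpose M = M"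
    using assms pos_def_invertible pos_def_symmetric by auto
  have "0 < quad_form (matrix_inv M) x" if "x \<noteq> 0" for x
  proof -
    have "matrix_inv M *v x \<noteq> 0"
      using that matrix_vector_mul_matrix_inv[OF M(1), of x] by force
    then show ?thesis
      using quad_form_matrix_inv[OF M, of x] pos_def_quad_form_pos[OF assms]
      by (simp add: quad_form_def)
  qed
  then show ?thesis
    using symmetric_matrix_inv[OF M] by (simp add: pos_def_iff_quad_form)
qed

lemma pos_semidef_transpose_mult_self: "pos_semidef (transpose A ** A)"
  by (simp add: pos_semidef_iff_quad_form quad_form_transpose_mult_self matrix_transpose_mul)

section \<open>Spectral theory of symmetric matrices\<close>

lemma nonneg_quadratic_linear_coeff_zero:
  fixes b c :: real
  assumes "\<And>t. 0 \<le> b * t + c * t\<^sup>2"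
  shows "b = 0"
proof (rule ccontr)
  assume "b \<noteq> 0"
  define e where "e = \<bar>c\<bar> + 1"
  have "e > 0" "c < e" unfolding e_def by auto
  have "0 \<le> b * (- b / e) + c * (- b / e)\<^sup>2" by (rule assms)
  also have "\<dots> = b\<^sup>2 * (c - e) / e\<^sup>2"
    using \<open>e > 0\<close> by (simp add: field_simps power2_eq_square)
  also have "\<dots> < 0"
    using \<open>b \<noteq> 0\<close> \<open>c < e\<close> \<open>e > 0\<close> by (intro divide_neg_pos mult_pos_neg) auto
  finally show False by simp
qed

lemma rayleigh_minimizer_exists:
  fixes M :: "real^'n::finite^'n"
  assumes W: "subspace W" and w: "w \<in> W" "w \<noteq> 0"
  shows "\<exists>v\<in>W. norm v = 1 \<and> (\<forall>x\<in>W. quad_form M v * (x \<bullet> x) \<le> quad_form M x)"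
proof -
  let ?K = "sphere 0 1 \<inter> W"
  have "compact ?K"
    using closed_subspace[OF W] by (intro compact_Int_closed) auto
  moreover have "w /\<^sub>R norm w \<in> ?K"
    using w W by (auto simp: subspace_scale)
  moreover have "continuous_on ?K (quad_form M)"
    unfolding quad_form_def by (intro continuous_intros)
  ultimately obtain v where v: "v \<in> ?K" and min: "\<And>y. y \<in> ?K \<Longrightarrow> quad_form M v \<le> quad_form M y"
    using continuous_attains_inf[of ?K "quad_form M"] by blast
  have "quad_form M v * (x \<bullet> x) \<le> quad_form M x" if "x \<in> W" for x
  proof (cases "x = 0")
    case False
    then have "quad_form M v \<le> quad_form M (x /\<^sub>R norm x)"
      using that W by (intro min) (auto simp: subspace_scale)
    also have "\<dots> = quad_form M x / (norm x)\<^sup>2"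
      by (simp add: quad_form_scaleR_vector power_divide divide_inverse power_inverse)
    finally show ?thesis
      using False by (simp add: field_simps dot_square_norm)
  qed (simp add: quad_form_def)
  then show ?thesis
    using v by auto
qed

text \<open>A minimiser of the Rayleigh quotient on an invariant subspace is an eigenvector: otherwise
  moving it in the direction of the residual \<open>M v - \<mu> v\<close> would decrease the quotient to first
  order.\<close>
lemma rayleigh_minimizer_eigenvector:
  fixes M :: "real^'n::finite^'n"
  assumes sym: "transpose M = M" and W: "subspace W" and inv: "\<And>x. x \<in> W \<Longrightarrow> M *v x \<in> W"
    and v: "v \<in> W" "norm v = 1"
    and min: "\<And>x. x \<in> W \<Longrightarrow> quad_form M v * (x \<bullet> x) \<le> quad_form M x"
  shows "M *v v = quad_form M v *\<^sub>R v"
proof -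
  define \<mu> where "\<mu> = quad_form M v"
  define u where "u = M *v v - \<mu> *\<^sub>R v"
  have vv: "v \<bullet> v = 1"
    using v(2) by (simp add: dot_square_norm)
  have uW: "u \<in> W"
    unfolding u_def using inv v W by (simp add: subspace_diff subspace_scale)
  have vu: "v \<bullet> u = 0"
    unfolding u_def \<mu>_def quad_form_def using vv by (simp add: inner_diff_right)
  have vMu: "v \<bullet> (M *v u) = u \<bullet> u"
    using inner_symmetric_matrix[OF sym, of v u] vu
    by (simp add: u_def inner_diff_left inner_commute)
  have "0 \<le> (2 * (u \<bullet> u)) * t + (quad_form M u - \<mu> * (u \<bullet> u)) * t\<^sup>2" for t
  proof -
    have "quad_form M (v + t *\<^sub>R u) = \<mu> + 2 * t * (u \<bullet> u) + t\<^sup>2 * quad_form M u"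
      using quad_form_add_vector[OF sym, of v "t *\<^sub>R u"] vMu
      by (simp add: \<mu>_def quad_form_scaleR_vector matrix_vector_mult_scaleR)
    moreover have "(v + t *\<^sub>R u) \<bullet> (v + t *\<^sub>R u) = 1 + t\<^sup>2 * (u \<bullet> u)"
      using vv vu by (simp add: inner_add_left inner_add_right inner_commute power2_eq_square)
    moreover have "\<mu> * ((v + t *\<^sub>R u) \<bullet> (v + t *\<^sub>R u)) \<le> quad_form M (v + t *\<^sub>R u)"
      unfolding \<mu>_def using v uW W by (intro min) (simp add: subspace_add subspace_scale)
    ultimately have "\<mu> * (1 + t\<^sup>2 * (u \<bullet> u)) \<le> \<mu> + 2 * t * (u \<bullet> u) + t\<^sup>2 * quad_form M u"
      by (simp only:)
    then show ?thesis
      by (simp add: algebra_simps)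
  qed
  then have "2 * (u \<bullet> u) = 0"
    by (rule nonneg_quadratic_linear_coeff_zero)
  then show ?thesis
    by (simp add: u_def \<mu>_def)
qed

lemma symmetric_eigenvector_in_invariant_subspace:
  fixes M :: "real^'n::finite^'n"
  assumes "transpose M = M" "subspace W" "\<And>x. x \<in> W \<Longrightarrow> M *v x \<in> W" "w \<in> W" "w \<noteq> 0"
  shows "\<exists>v\<in>W. norm v = 1 \<and> M *v v = quad_form M v *\<^sub>R v
           \<and> (\<forall>x\<in>W. quad_form M v * (x \<bullet> x) \<le> quad_form M x)"
  using rayleigh_minimizer_exists[OF assms(2,4,5), of M]
    rayleigh_minimizer_eigenvector[OF assms(1-3)] by metis

lemma symmetric_eigenvectors_orthogonal:
  assumes "transpose M = M" "M *v u = a *\<^sub>R u" "M *v v = b *\<^sub>R v" "a \<noteq> b"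
  shows "u \<bullet> (v::real^'n::finite) = 0"
proof -
  have "b * (u \<bullet> v) = a * (u \<bullet> v)"
    using inner_symmetric_matrix[OF assms(1), of u v] assms(2,3) by simp
  then show ?thesis
    using assms(4) by simp
qed

lemma finite_eigenvalues:
  fixes M :: "real^'n::finite^'n"
  assumes sym: "transpose M = M"
  shows "finite {l. is_eigenvalue M l}"
proof -
  let ?E = "{l. is_eigenvalue M l}"
  define vec where "vec l = (SOME v. v \<noteq> 0 \<and> M *v v = l *\<^sub>R v)" for l
  have vec: "vec l \<noteq> 0" "M *v vec l = l *\<^sub>R vec l" if "l \<in> ?E" for l
    using someI_ex[of "\<lambda>v. v \<noteq> 0 \<and> M *v v = l *\<^sub>R v"] that
    unfolding vec_def is_eigenvalue_def by auto
  have "inj_on vec ?E"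
    by (rule inj_onI) (metis vec scaleR_cancel_right)
  moreover have "pairwise orthogonal (vec ` ?E)"
    unfolding pairwise_def orthogonal_def
    by (metis (no_types, lifting) imageE symmetric_eigenvectors_orthogonal[OF sym] vec(2))
  then have "finite (vec ` ?E)"
    by (rule pairwise_orthogonal_imp_finite)
  ultimately show ?thesis
    using finite_imageD by blast
qed

lemma lambda_min_rayleigh:
  fixes M :: "real^'n::finite^'n"
  assumes sym: "transpose M = M"
  shows "is_eigenvalue M (lambda_min M)"
    and "\<exists>v. norm v = 1 \<and> quad_form M v = lambda_min M"
    and "lambda_min M * (x \<bullet> x) \<le> quad_form M x"
proof -
  obtain i :: 'n where True by blast
  obtain v where v: "norm v = 1" "M *v v = quad_form M v *\<^sub>R v"
    and min: "\<And>x. quad_form M v * (x \<bullet> x) \<le> quad_form M x"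
    using symmetric_eigenvector_in_invariant_subspace[OF sym subspace_UNIV, of "axis i 1"] by auto
  have eig: "is_eigenvalue M (quad_form M v)"
    unfolding is_eigenvalue_def using v by (auto intro!: exI[of _ v])
  have "lambda_min M = quad_form M v"
    unfolding lambda_min_def
  proof (rule Min_eqI[OF finite_eigenvalues[OF sym]])
    fix l
    assume "l \<in> {l. is_eigenvalue M l}"
    then obtain w where "w \<noteq> 0" "M *v w = l *\<^sub>R w"
      unfolding is_eigenvalue_def by auto
    then show "quad_form M v \<le> l"
      using min[of w] by (simp add: quad_form_def)
  qed (use eig in simp)
  then show "is_eigenvalue M (lambda_min M)" "\<exists>v. norm v = 1 \<and> quad_form M v = lambda_min M"
    "lambda_min M * (x \<bullet> x) \<le> quad_form M x"
    using eig v min by auto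
qed

lemma lambda_max_eq_uminus_lambda_min:
  fixes M :: "real^'n::finite^'n"
  assumes "transpose M = M"
  shows "lambda_max M = - lambda_min (- M)"
proof -
  have sym: "transpose (- M) = - M"
    using assms by (simp add: transpose_uminus)
  have "is_eigenvalue (- M) l \<longleftrightarrow> is_eigenvalue M (- l)" for l
    by (auto simp: is_eigenvalue_def uminus_matrix_vector_mult
        minus_equation_iff[of "M *v v" for v])
  then have "{l. is_eigenvalue M l} = uminus ` {l. is_eigenvalue (- M) l}"
    by (auto simp: image_iff) (metis minus_minus)
  moreover have "{l. is_eigenvalue (- M) l} \<noteq> {}"
    using lambda_min_rayleigh(1)[OF sym] by blast
  ultimately show ?thesis
    unfolding lambda_max_def lambda_min_def
    using minus_Min_eq_Max[OF finite_eigenvalues[OF sym]] by simp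
qed

lemma lambda_max_rayleigh:
  fixes M :: "real^'n::finite^'n"
  assumes "transpose M = M"
  shows "\<exists>v. norm v = 1 \<and> quad_form M v = lambda_max M"
    and "quad_form M x \<le> lambda_max M * (x \<bullet> x)"
proof -
  have sym: "transpose (- M) = - M"
    using assms by (simp add: transpose_uminus)
  show "\<exists>v. norm v = 1 \<and> quad_form M v = lambda_max M"
    using lambda_min_rayleigh(2)[OF sym]
    by (auto simp: lambda_max_eq_uminus_lambda_min[OF assms] quad_form_uminus)
  show "quad_form M x \<le> lambda_max M * (x \<bullet> x)"
    using lambda_min_rayleigh(3)[OF sym, of x]
    by (simp add: lambda_max_eq_uminus_lambda_min[OF assms] quad_form_uminus)
qed

lemma lambda_min_pos: "pos_def M \<Longrightarrow> 0 < lambda_min M"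
  by (metis lambda_min_rayleigh(2) norm_zero pos_def_quad_form_pos pos_def_symmetric zero_neq_one)

lemma lambda_max_pos: "pos_def M \<Longrightarrow> 0 < lambda_max M"
  by (metis lambda_max_rayleigh(1) norm_zero pos_def_quad_form_pos pos_def_symmetric zero_neq_one)

lemma lambda_min_nonneg: "pos_semidef M \<Longrightarrow> 0 \<le> lambda_min M"
  by (metis lambda_min_rayleigh(2) pos_semidef_quad_form_nonneg pos_semidef_symmetric)

lemma lambda_max_nonneg: "pos_semidef M \<Longrightarrow> 0 \<le> lambda_max M"
  by (metis lambda_max_rayleigh(1) pos_semidef_quad_form_nonneg pos_semidef_symmetric)

lemma lambda_max_mono:
  fixes M N :: "real^'n::finite^'n"
  assumes "transpose M = M" "transpose N = N" "\<And>x. quad_form M x \<le> quad_form N x"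
  shows "lambda_max M \<le> lambda_max N"
proof -
  obtain v where "norm v = 1" "quad_form M v = lambda_max M"
    using lambda_max_rayleigh(1)[OF assms(1)] by blast
  then show ?thesis
    using assms(3)[of v] lambda_max_rayleigh(2)[OF assms(2), of v] by (simp add: dot_square_norm)
qed

lemma is_eigenvalue_mult_commute:
  fixes A B :: "real^'n::finite^'n"
  assumes B: "invertible B"
  shows "is_eigenvalue (B ** A) l \<longleftrightarrow> is_eigenvalue (A ** B) l"
proof
  assume "is_eigenvalue (B ** A) l"
  then obtain w where "w \<noteq> 0" "B *v (A *v w) = l *\<^sub>R w"
    unfolding is_eigenvalue_def by (auto simp: matrix_vector_mul_assoc)
  then have "(A ** B) *v (matrix_inv B *v w) = l *\<^sub>R (matrix_inv B *v w)"
    by (metis B matrix_inv_matrix_vector_mul matrix_vector_mul_assoc matrix_vector_mul_matrix_inv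
        matrix_vector_mult_scaleR)
  then show "is_eigenvalue (A ** B) l"
    unfolding is_eigenvalue_def
    by (metis B \<open>w \<noteq> 0\<close> invertible_matrix_vector_nonzero matrix_vector_mul_matrix_inv
        matrix_vector_mult_0_right)
next
  assume "is_eigenvalue (A ** B) l"
  then obtain w where "w \<noteq> 0" "(A ** B) *v w = l *\<^sub>R w"
    unfolding is_eigenvalue_def by blast
  then have "(B ** A) *v (B *v w) = l *\<^sub>R (B *v w)"
    by (metis matrix_vector_mul_assoc matrix_vector_mult_scaleR)
  then show "is_eigenvalue (B ** A) l"
    unfolding is_eigenvalue_def using B \<open>w \<noteq> 0\<close> invertible_matrix_vector_nonzero by blast
qed

definition orthonormal_eigenvectors :: "real^'n::finite^'n \<Rightarrow> (real^'n) set \<Rightarrow> bool" where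
  "orthonormal_eigenvectors M E \<longleftrightarrow>
     pairwise orthogonal E \<and> (\<forall>e\<in>E. norm e = 1 \<and> M *v e = quad_form M e *\<^sub>R e)"

lemma orthonormal_eigenvectors_card_le:
  assumes "orthonormal_eigenvectors M (E :: (real^'n::finite) set)"
  shows "card E \<le> CARD('n)"
proof -
  have "independent E"
    using assms unfolding orthonormal_eigenvectors_def
    by (metis norm_zero pairwise_orthogonal_independent zero_neq_one)
  then show ?thesis
    using independent_bound by fastforce
qed

lemma orthonormal_eigenvectors_extend:
  fixes M :: "real^'n::finite^'n"
  assumes sym: "transpose M = M" and E: "orthonormal_eigenvectors M E" and span: "span E \<noteq> UNIV"
  shows "\<exists>v. v \<notin> E \<and> orthonormal_eigenvectors M (insert v E)"
proof -
  define W where "W = {x. \<forall>e\<in>E. orthogonal e x}"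
  have W: "subspace W"
    unfolding W_def by (rule subspace_orthogonal_to_vectors)
  have "M *v x \<in> W" if "x \<in> W" for x
    using that E inner_symmetric_matrix[OF sym]
    by (simp add: W_def orthonormal_eigenvectors_def orthogonal_def)
  moreover obtain a where "a \<noteq> 0" "a \<in> W"
    using span_not_UNIV_orthogonal[OF span] span_base
    by (fastforce simp: W_def orthogonal_def inner_commute)
  ultimately obtain v where v: "v \<in> W" "norm v = 1" "M *v v = quad_form M v *\<^sub>R v"
    using symmetric_eigenvector_in_invariant_subspace[OF sym W] by metis
  have "v \<notin> E"
    using v by (auto simp: W_def orthogonal_def dot_square_norm)
  moreover have "orthonormal_eigenvectors M (insert v E)"
    using E v by (auto simp: orthonormal_eigenvectors_def pairwise_insert W_def orthogonal_commute)
  ultimately show ?thesis by blast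
qed

lemma symmetric_orthonormal_eigenbasis:
  fixes M :: "real^'n::finite^'n"
  assumes sym: "transpose M = M"
  shows "\<exists>E. orthonormal_eigenvectors M E \<and> span E = UNIV"
proof -
  have "orthonormal_eigenvectors M {}"
    by (simp add: orthonormal_eigenvectors_def)
  then obtain E where E: "orthonormal_eigenvectors M E"
    and max: "\<And>E'. orthonormal_eigenvectors M E' \<Longrightarrow> card E' \<le> card E"
    using ex_has_greatest_nat[of "orthonormal_eigenvectors M" "{}" card "Suc CARD('n)"]
      orthonormal_eigenvectors_card_le by (metis less_Suc_eq_le)
  have "span E = UNIV"
  proof (rule ccontr)
    assume "span E \<noteq> UNIV"
    then obtain v where "v \<notin> E" "orthonormal_eigenvectors M (insert v E)"
      using orthonormal_eigenvectors_extend[OF sym E] by blast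
    moreover have "finite E"
      using E pairwise_orthogonal_imp_finite unfolding orthonormal_eigenvectors_def by blast
    ultimately show False
      using max[of "insert v E"] by simp
  qed
  then show ?thesis
    using E by blast
qed

lemma orthonormal_sum_inner:
  assumes "pairwise orthogonal E" "finite E" "e \<in> E" "norm e = 1"
  shows "(\<Sum>e'\<in>E. (g e' * (e' \<bullet> e)) *\<^sub>R e') = g e *\<^sub>R (e::'a::real_inner)"
proof -
  have "(\<Sum>e'\<in>E. (g e' * (e' \<bullet> e)) *\<^sub>R e') = (\<Sum>e'\<in>E. if e' = e then g e *\<^sub>R e else 0)"
    using assms by (intro sum.cong) (auto simp: pairwise_def orthogonal_def dot_square_norm)
  then show ?thesis
    using assms by simp
qed

lemma matrix_eq_on_spanning_set:
  fixes A B :: "real^'n::finite^'m::finite"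
  assumes "span E = UNIV" "\<And>e. e \<in> E \<Longrightarrow> A *v e = B *v e"
  shows "A = B"
  using real_vector.linear_eq_on_span[OF matrix_vector_mul_linear matrix_vector_mul_linear,
      of E A B] assms
  by (simp add: matrix_eq)

section \<open>Positive semidefinite square roots\<close>

text \<open>\<open>T + sqrt \<mu>\<close> annihilates \<open>T e - sqrt \<mu> e\<close>, and it is positive definite unless
  \<open>\<mu> = 0\<close>.\<close>
lemma pos_semidef_sqrt_on_eigenvector:
  fixes T :: "real^'n::finite^'n"
  assumes T: "pos_semidef T" and e: "(T ** T) *v e = \<mu> *\<^sub>R e" and \<mu>: "0 \<le> \<mu>"
  shows "T *v e = sqrt \<mu> *\<^sub>R e"
proof -
  define s where "s = sqrt \<mu>"
  define w where "w = T *v e - s *\<^sub>R e"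
  have sym: "transpose T = T"
    using T by (rule pos_semidef_symmetric)
  have "T *v w + s *\<^sub>R w = 0"
    using e \<mu> by (simp add: w_def s_def matrix_vector_mul_assoc[symmetric] algebra_simps)
  then have "quad_form T w + s * (w \<bullet> w) = 0"
    by (metis inner_add_right inner_scaleR_right inner_zero_right quad_form_def)
  moreover have "0 \<le> quad_form T w" "0 \<le> s"
    using T \<mu> pos_semidef_quad_form_nonneg s_def by auto
  ultimately consider "w = 0" | "s = 0"
    by (metis add_nonneg_eq_0_iff inner_eq_zero_iff mult_eq_0_iff zero_le_mult_iff inner_ge_zero)
  then show ?thesis
  proof cases
    case 2
    then have "(T *v e) \<bullet> (T *v e) = 0"
      using e inner_symmetric_matrix[OF sym, of e "T *v e"] \<mu> s_def
      by (simp add: matrix_vector_mul_assoc)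
    then show ?thesis
      using 2 by (simp add: s_def)
  qed (simp add: w_def s_def)
qed

lemma pos_semidef_sqrt_unique:
  fixes M S T :: "real^'n::finite^'n"
  assumes M: "pos_semidef M"
    and S: "pos_semidef S" "S ** S = M" and T: "pos_semidef T" "T ** T = M"
  shows "S = T"
proof -
  obtain E where E: "orthonormal_eigenvectors M E" "span E = UNIV"
    using symmetric_orthonormal_eigenbasis pos_semidef_symmetric[OF M] by blast
  show ?thesis
  proof (rule matrix_eq_on_spanning_set[OF E(2)])
    fix e
    assume "e \<in> E"
    then have "M *v e = quad_form M e *\<^sub>R e" "0 \<le> quad_form M e"
      using E(1) M pos_semidef_quad_form_nonneg unfolding orthonormal_eigenvectors_def by auto
    then show "S *v e = T *v e"
      using pos_semidef_sqrt_on_eigenvector S T by metis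
  qed
qed

lemma pos_semidef_sqrt_exists:
  fixes M :: "real^'n::finite^'n"
  assumes M: "pos_semidef M"
  shows "\<exists>S. pos_semidef S \<and> S ** S = M"
proof -
  obtain E where E: "orthonormal_eigenvectors M E" "span E = UNIV"
    using symmetric_orthonormal_eigenbasis pos_semidef_symmetric[OF M] by blast
  have orth: "pairwise orthogonal E" and fin: "finite E"
    and eig: "\<And>e. e \<in> E \<Longrightarrow> norm e = 1 \<and> M *v e = quad_form M e *\<^sub>R e"
    using E(1) pairwise_orthogonal_imp_finite unfolding orthonormal_eigenvectors_def by blast+
  define c where "c e = sqrt (quad_form M e)" for e
  define f where "f x = (\<Sum>e\<in>E. (c e * (e \<bullet> x)) *\<^sub>R e)" for x
  have "linear f"
    unfolding f_def
    by (intro linear_compose_sum ballI linearI) (simp_all add: algebra_simps inner_add_right)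
  then have Sx: "matrix f *v x = f x" for x
    by (simp add: matrix_vector_mul)
  have fe: "f e = c e *\<^sub>R e" if "e \<in> E" for e
    unfolding f_def using orthonormal_sum_inner[OF orth fin that, of c] eig that
    by (simp add: inner_commute)
  have "adjoint f = f"
    by (intro adjoint_unique allI)
      (simp add: f_def inner_sum_left inner_sum_right inner_commute mult_ac)
  then have "transpose (matrix f) = matrix f"
    by (metis Sx adjoint_matrix ext matrix_of_matrix_vector_mul)
  moreover have "0 \<le> x \<bullet> (matrix f *v x)" for x
    unfolding Sx f_def inner_sum_right
    by (intro sum_nonneg)
      (simp add: c_def inner_commute pos_semidef_quad_form_nonneg[OF M] mult.assoc)
  moreover have "matrix f ** matrix f = M"
  proof (rule matrix_eq_on_spanning_set[OF E(2)])
    fix e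
    assume "e \<in> E"
    then show "(matrix f ** matrix f) *v e = M *v e"
      using eig fe pos_semidef_quad_form_nonneg[OF M]
      by (simp add: matrix_vector_mul_assoc[symmetric] Sx c_def linear_cmul[OF \<open>linear f\<close>])
  qed
  ultimately show ?thesis
    unfolding pos_semidef_def by blast
qed

lemma msqrt:
  assumes "pos_semidef M"
  shows "pos_semidef (msqrt M)" and "msqrt M ** msqrt M = M"
proof -
  have "\<exists>!S. pos_semidef S \<and> S ** S = M"
    using pos_semidef_sqrt_exists[OF assms] pos_semidef_sqrt_unique[OF assms] by blast
  then show "pos_semidef (msqrt M)" "msqrt M ** msqrt M = M"
    using theI'[of "\<lambda>S. pos_semidef S \<and> S ** S = M"] unfolding msqrt_def by auto
qed

lemma invertible_msqrt:
  assumes "pos_def M"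
  shows "invertible (msqrt M)"
proof -
  have "msqrt M ** (msqrt M ** matrix_inv M) = mat 1"
    using msqrt(2)[OF pos_def_imp_pos_semidef[OF assms]]
      matrix_inv_right[OF pos_def_invertible[OF assms]]
    by (simp add: matrix_mul_assoc)
  then show ?thesis
    using invertible_right_inverse by blast
qed

section \<open>The modified Riccati operator\<close>

definition riccati_map ::
    "real^'n::finite^'n \<Rightarrow> real^'m::finite^'n \<Rightarrow> real^'n^'n \<Rightarrow> real^'m^'m \<Rightarrow> real
      \<Rightarrow> real^'n^'n \<Rightarrow> real^'n^'n"
  where
  "riccati_map A B Q R p X = Q + transpose A ** X ** A
     - (1 - p) *\<^sub>R (transpose A ** X ** B ** matrix_inv (R + transpose B ** X ** B)
                      ** transpose B ** X ** A)"

lemma mare_iff_riccati_map: "mare A B Q R p X \<longleftrightarrow> riccati_map A B Q R p X = X"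
  unfolding mare_def riccati_map_def by auto

lemma symmetric_add_congruence:
  fixes R :: "real^'m::finite^'m" and X :: "real^'n::finite^'n"
  shows "transpose R = R \<Longrightarrow> transpose X = X
           \<Longrightarrow> transpose (R + transpose B ** X ** B) = R + transpose B ** X ** B"
  by (simp add: transpose_add matrix_transpose_mul matrix_mul_assoc)

lemma quad_form_gain_term:
  fixes X :: "real^'n::finite^'n" and N :: "real^'m::finite^'m"
    and A :: "real^'n^'n" and B :: "real^'m^'n" and x :: "real^'n"
  assumes "transpose X = X"
  defines "w \<equiv> transpose B *v (X *v (A *v x))"
  shows "quad_form (transpose A ** X ** B ** N ** transpose B ** X ** A) x = w \<bullet> (N *v w)"
proof -
  have "quad_form (transpose A ** X ** B ** N ** transpose B ** X ** A) x
      = quad_form (transpose (transpose B ** X ** A) ** N ** (transpose B ** X ** A)) x"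
    using assms by (simp add: matrix_transpose_mul matrix_mul_assoc)
  also have "\<dots> = quad_form N ((transpose B ** X ** A) *v x)"
    by (rule quad_form_congruence)
  also have "\<dots> = w \<bullet> (N *v w)"
    by (simp only: quad_form_def w_def matrix_vector_mul_assoc matrix_mul_assoc)
  finally show ?thesis .
qed

lemma quad_form_riccati_map:
  fixes X :: "real^'n::finite^'n" and R :: "real^'m::finite^'m"
    and A :: "real^'n^'n" and B :: "real^'m^'n" and x :: "real^'n"
  assumes X: "transpose X = X"
  defines "S \<equiv> R + transpose B ** X ** B" and "w \<equiv> transpose B *v (X *v (A *v x))"
  shows "quad_form (riccati_map A B Q R p X) x
           = quad_form Q x + quad_form X (A *v x) - (1 - p) * (w \<bullet> (matrix_inv S *v w))"
  unfolding riccati_map_def S_def w_def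
  by (simp add: quad_form_add quad_form_diff quad_form_scaleR quad_form_congruence
      quad_form_gain_term[OF X])

lemma completion_of_squares:
  fixes Y :: "real^'n::finite^'n" and R :: "real^'m::finite^'m"
    and B :: "real^'m^'n" and a :: "real^'n"
  defines "S \<equiv> R + transpose B ** Y ** B" and "w \<equiv> transpose B *v (Y *v a)"
  assumes Y: "transpose Y = Y" and R: "transpose R = R" and S: "invertible S"
  shows "quad_form Y (a + B *v u) + quad_form R u
           = quad_form Y a - w \<bullet> (matrix_inv S *v w) + quad_form S (u + matrix_inv S *v w)"
proof -
  define k where "k = matrix_inv S *v w"
  have symS: "transpose S = S"
    unfolding S_def using symmetric_add_congruence[OF R Y] .
  have Sk: "S *v k = w"
    unfolding k_def using matrix_vector_mul_matrix_inv[OF S] .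
  have "quad_form S (u + k) = quad_form R u + quad_form Y (B *v u) + 2 * (u \<bullet> w) + quad_form S k"
    using quad_form_add_vector[OF symS, of u k] Sk
    by (simp add: S_def quad_form_add quad_form_congruence)
  moreover have "a \<bullet> (Y *v (B *v u)) = u \<bullet> w"
    using inner_symmetric_matrix[OF Y, of a "B *v u"] inner_transpose_right[of u B "Y *v a"]
    by (simp only: w_def inner_commute)
  then have "quad_form Y (a + B *v u) = quad_form Y a + 2 * (u \<bullet> w) + quad_form Y (B *v u)"
    using quad_form_add_vector[OF Y, of a "B *v u"] by simp
  moreover have "w \<bullet> k = quad_form S k"
    using Sk by (simp add: quad_form_def inner_commute)
  ultimately show ?thesis
    by (simp add: k_def)
qed

lemma riccati_map_completion:
  fixes Y :: "real^'n::finite^'n" and R :: "real^'m::finite^'m"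
    and A :: "real^'n^'n" and B :: "real^'m^'n" and x :: "real^'n"
  defines "S \<equiv> R + transpose B ** Y ** B" and "w \<equiv> transpose B *v (Y *v (A *v x))"
  assumes Y: "transpose Y = Y" and R: "transpose R = R" and S: "invertible S"
  shows "quad_form (riccati_map A B Q R p Y) x + (1 - p) * quad_form S (u + matrix_inv S *v w)
           = quad_form Q x + p * quad_form Y (A *v x)
             + (1 - p) * (quad_form Y (A *v x + B *v u) + quad_form R u)"
proof -
  let ?G = "w \<bullet> (matrix_inv S *v w)" and ?T = "quad_form S (u + matrix_inv S *v w)"
  have "quad_form (riccati_map A B Q R p Y) x = quad_form Q x + quad_form Y (A *v x) - (1 - p) * ?G"
    unfolding S_def w_def by (rule quad_form_riccati_map[OF Y])
  moreover have "?T = quad_form Y (A *v x + B *v u) + quad_form R u - quad_form Y (A *v x) + ?G"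
    using completion_of_squares[OF Y R S[unfolded S_def], of "A *v x" u]
    unfolding S_def w_def by linarith
  ultimately show ?thesis
    by (simp only:) (simp add: algebra_simps)
qed

lemma riccati_map_le_control:
  fixes Y :: "real^'n::finite^'n" and R :: "real^'m::finite^'m"
  assumes Y: "pos_semidef Y" and R: "pos_def R" and "p \<le> 1"
  shows "quad_form (riccati_map A B Q R p Y) x
           \<le> quad_form Q x + p * quad_form Y (A *v x)
             + (1 - p) * (quad_form Y (A *v x + B *v u) + quad_form R u)"
proof -
  have S: "pos_def (R + transpose B ** Y ** B)"
    using R Y by (rule pos_def_add_congruence)
  show ?thesis
    using riccati_map_completion[OF pos_semidef_symmetric[OF Y] pos_def_symmetric[OF R]
        pos_def_invertible[OF S], of A Q p x u]
      pos_def_imp_pos_semidef[OF S] pos_semidef_quad_form_nonneg \<open>p \<le> 1\<close>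
    by (smt (verit) mult_nonneg_nonneg)
qed

lemma riccati_map_optimal_control:
  fixes Y :: "real^'n::finite^'n" and R :: "real^'m::finite^'m"
    and A :: "real^'n^'n" and B :: "real^'m^'n" and x :: "real^'n"
  defines "S \<equiv> R + transpose B ** Y ** B"
  defines "k \<equiv> matrix_inv S *v (transpose B *v (Y *v (A *v x)))"
  assumes Y: "transpose Y = Y" and R: "transpose R = R" and S: "invertible S"
  shows "quad_form (riccati_map A B Q R p Y) x
           = quad_form Q x + p * quad_form Y (A *v x)
             + (1 - p) * (quad_form Y (A *v x - B *v k) + quad_form R k)"
  using riccati_map_completion[OF Y R S[unfolded S_def], of A Q p x "- k"]
  by (simp add: S_def k_def quad_form_def vec.neg)

lemma gain_term_le_quad_form:
  fixes X :: "real^'n::finite^'n" and R :: "real^'m::finite^'m"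
    and B :: "real^'m^'n" and a :: "real^'n"
  defines "S \<equiv> R + transpose B ** X ** B" and "w \<equiv> transpose B *v (X *v a)"
  assumes X: "pos_semidef X" and R: "pos_def R"
  shows "w \<bullet> (matrix_inv S *v w) \<le> quad_form X a"
proof -
  define k where "k = matrix_inv S *v w"
  have "pos_def S"
    unfolding S_def using R X by (rule pos_def_add_congruence)
  then have "quad_form X (a + B *v (- k)) + quad_form R (- k)
               = quad_form X a - w \<bullet> k + quad_form S (- k + k)"
    using completion_of_squares[OF pos_semidef_symmetric[OF X] pos_def_symmetric[OF R],
        where B = B and a = a and u = "- k"]
    by (simp only: S_def w_def k_def pos_def_invertible)
  then show ?thesis
    using pos_semidef_quad_form_nonneg[OF X, of "a + B *v (- k)"]
      pos_semidef_quad_form_nonneg[OF pos_def_imp_pos_semidef[OF R], of "- k"]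
    by (simp add: k_def quad_form_def)
qed

lemma riccati_map_mono_param:
  fixes Y :: "real^'n::finite^'n" and R :: "real^'m::finite^'m"
  assumes Y: "pos_semidef Y" and R: "pos_def R" and "p \<le> q"
  shows "quad_form (riccati_map A B Q R p Y) x \<le> quad_form (riccati_map A B Q R q Y) x"
proof -
  define S where "S = R + transpose B ** Y ** B"
  define w where "w = transpose B *v (Y *v (A *v x))"
  have S: "pos_def S"
    unfolding S_def using R Y by (rule pos_def_add_congruence)
  have "0 \<le> w \<bullet> (matrix_inv S *v w)"
    using quad_form_matrix_inv[OF pos_def_invertible[OF S] pos_def_symmetric[OF S]]
      pos_semidef_quad_form_nonneg[OF pos_def_imp_pos_semidef[OF S]] by simp
  then show ?thesis
    using quad_form_riccati_map[OF pos_semidef_symmetric[OF Y], of A B Q R _ x] \<open>p \<le> q\<close>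
    unfolding S_def w_def by (simp add: mult_right_mono)
qed

lemma nonneg_if_dominates_contraction:
  fixes L :: "('a \<Rightarrow> real) \<Rightarrow> 'a \<Rightarrow> real"
  assumes mono: "\<And>\<phi> \<psi> x. (\<And>y. \<phi> y \<le> \<psi> y) \<Longrightarrow> L \<phi> x \<le> L \<psi> x"
    and homog: "\<And>c \<phi> x. L (\<lambda>y. c * \<phi> y) x = c * L \<phi> x"
    and D: "\<And>x. L D x \<le> D x" and V: "\<And>x. L V x \<le> r * V x" and r: "0 \<le> r" "r < 1"
    and lower: "\<And>x. - c * V x \<le> D x" and c: "0 \<le> c"
  shows "0 \<le> D x"
proof -
  have bound: "- c * r ^ k * V x \<le> D x" for k x
  proof (induction k arbitrary: x)
    case (Suc k)
    have "- c * r ^ Suc k * V x = (- c * r ^ k) * (r * V x)"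
      by simp
    also have "\<dots> \<le> (- c * r ^ k) * L V x"
      using V c r by (intro mult_left_mono_neg) auto
    also have "\<dots> = L (\<lambda>y. - c * r ^ k * V y) x"
      by (rule homog[symmetric])
    also have "\<dots> \<le> L D x"
      by (rule mono) (rule Suc)
    also have "\<dots> \<le> D x"
      by (rule D)
    finally show ?case .
  qed (use lower in simp)
  have "(\<lambda>k. - c * r ^ k * V x) \<longlonglongrightarrow> - c * 0 * V x"
    by (intro tendsto_intros LIMSEQ_power_zero) (use r in simp)
  then show ?thesis
    using bound by (simp add: LIMSEQ_le_const2)
qed

lemma quad_form_dominated:
  fixes X Y :: "real^'n::finite^'n"
  assumes "pos_def X" "transpose Y = Y"
  shows "\<exists>c\<ge>1. \<forall>x. quad_form Y x \<le> c * quad_form X x"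
proof (intro exI allI conjI)
  define c where "c = max 1 (lambda_max Y / lambda_min X)"
  have X: "0 < lambda_min X"
    using assms(1) by (rule lambda_min_pos)
  show "1 \<le> c"
    by (simp add: c_def)
  fix x
  have "quad_form Y x \<le> lambda_max Y * (x \<bullet> x)"
    using lambda_max_rayleigh(2)[OF assms(2)] .
  also have "\<dots> \<le> c * lambda_min X * (x \<bullet> x)"
    using X by (intro mult_right_mono) (auto simp: c_def field_simps max_def)
  also have "\<dots> \<le> c * quad_form X x"
    using lambda_min_rayleigh(3)[OF pos_def_symmetric[OF assms(1)], of x] \<open>1 \<le> c\<close>
    by (simp add: mult.assoc mult_left_mono)
  finally show "quad_form Y x \<le> c * quad_form X x" .
qed

text \<open>Both solutions are compared along the closed loop of the supersolution's optimal gain, on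
  which the supersolution is a strict Lyapunov function because \<open>Q\<close> is positive definite.\<close>
lemma riccati_comparison:
  fixes A Q X Y :: "real^'n::finite^'n" and R :: "real^'m::finite^'m"
  assumes Q: "pos_def Q" and R: "pos_def R" and p: "0 \<le> p" "p \<le> 1"
    and Y: "pos_semidef Y"
    and Ysub: "\<And>x. quad_form Y x \<le> quad_form (riccati_map A B Q R p Y) x"
    and X: "pos_def X" and Xsup: "\<And>x. quad_form (riccati_map A B Q R p X) x \<le> quad_form X x"
  shows "quad_form Y x \<le> quad_form X x"
proof -
  define k where "k x = matrix_inv (R + transpose B ** X ** B) *v (transpose B *v (X *v (A *v x)))"
    for x
  define L where "L \<phi> x = p * \<phi> (A *v x) + (1 - p) * \<phi> (A *v x - B *v k x)"
    for \<phi> :: "real^'n \<Rightarrow> real" and x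
  have SX: "pos_def (R + transpose B ** X ** B)"
    using pos_def_add_congruence[OF R pos_def_imp_pos_semidef[OF X]] .
  have X_step: "quad_form Q x + L (quad_form X) x + (1 - p) * quad_form R (k x) \<le> quad_form X x"
    for x
    using Xsup[of x] riccati_map_optimal_control[OF pos_def_symmetric[OF X] pos_def_symmetric[OF R]
        pos_def_invertible[OF SX], where A = A and Q = Q and p = p and x = x]
    by (simp add: L_def k_def algebra_simps)
  have Y_step: "quad_form Y x \<le> quad_form Q x + L (quad_form Y) x + (1 - p) * quad_form R (k x)"
    for x
    using Ysub[of x] riccati_map_le_control[OF Y R p(2), where A = A and B = B and Q = Q and x = x
        and u = "- k x"]
    by (simp add: L_def vec.neg algebra_simps)
  obtain c where c: "1 \<le> c" "\<And>x. quad_form X x \<le> c * quad_form Q x"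
    using quad_form_dominated[OF Q pos_def_symmetric[OF X]] by blast
  obtain d where d: "1 \<le> d" "\<And>x. quad_form Y x \<le> d * quad_form X x"
    using quad_form_dominated[OF X pos_semidef_symmetric[OF Y]] by blast
  have "0 \<le> quad_form X x - quad_form Y x"
  proof (rule nonneg_if_dominates_contraction[where L = L and V = "quad_form X" and r = "1 - 1 / c"
        and c = d])
    show "L \<phi> x \<le> L \<psi> x" if "\<And>y. \<phi> y \<le> \<psi> y" for \<phi> \<psi> x
      unfolding L_def using that p by (intro add_mono mult_left_mono) auto
    show "L (\<lambda>y. e * \<phi> y) x = e * L \<phi> x" for e \<phi> x
      by (simp add: L_def algebra_simps)
    show "L (\<lambda>x. quad_form X x - quad_form Y x) x \<le> quad_form X x - quad_form Y x" for x
      using X_step[of x] Y_step[of x] by (simp add: L_def algebra_simps)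
    show "L (quad_form X) x \<le> (1 - 1 / c) * quad_form X x" for x
    proof -
      have "quad_form X x / c \<le> quad_form Q x"
        using c(1) c(2)[of x] by (simp add: pos_divide_le_eq mult.commute)
      moreover have "0 \<le> (1 - p) * quad_form R (k x)"
        using p(2) pos_semidef_quad_form_nonneg[OF pos_def_imp_pos_semidef[OF R]] by simp
      ultimately have "L (quad_form X) x \<le> quad_form X x - quad_form X x / c"
        using X_step[of x] by linarith
      then show ?thesis
        by (simp add: algebra_simps)
    qed
    show "- d * quad_form X x \<le> quad_form X x - quad_form Y x" for x
      using d(2)[of x] pos_semidef_quad_form_nonneg[OF pos_def_imp_pos_semidef[OF X], of x] by simp
  qed (use c(1) d(1) in auto)
  then show ?thesis
    by simp
qed

lemma Psol_solves_mare:
  assumes "0 \<le> p" "p < q_crit A B Q R"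
  shows "pos_def (Psol A B Q R p)" and "mare A B Q R p (Psol A B Q R p)"
proof -
  define C where "C = {c. 0 \<le> c \<and> c \<le> 1 \<and>
      (\<forall>p. 0 \<le> p \<and> p < c \<longrightarrow> (\<exists>!X. pos_def X \<and> mare A B Q R p X))}"
  have "0 \<in> C" "bdd_above C"
    unfolding C_def by (auto intro: bdd_aboveI[of _ 1])
  moreover have "p < Sup C"
    using assms(2) unfolding q_crit_def C_def by simp
  ultimately obtain c where "c \<in> C" "p < c"
    using less_cSup_iff by blast
  then have "\<exists>!X. pos_def X \<and> mare A B Q R p X"
    using assms(1) unfolding C_def by blast
  then have "pos_def (Psol A B Q R p) \<and> mare A B Q R p (Psol A B Q R p)"
    unfolding Psol_def by (rule theI')
  then show "pos_def (Psol A B Q R p)" "mare A B Q R p (Psol A B Q R p)"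
    by simp_all
qed

lemma Psol_mono:
  fixes A Q :: "real^'n::finite^'n" and R :: "real^'m::finite^'m"
  assumes Q: "pos_def Q" and R: "pos_def R" and "0 \<le> p" "p \<le> q" "q < q_crit A B Q R" "q \<le> 1"
  shows "quad_form (Psol A B Q R p) x \<le> quad_form (Psol A B Q R q) x"
proof (rule riccati_comparison[OF Q R])
  have p: "pos_def (Psol A B Q R p)" "riccati_map A B Q R p (Psol A B Q R p) = Psol A B Q R p"
    using Psol_solves_mare[of p A B Q R] assms by (auto simp: mare_iff_riccati_map)
  have q: "pos_def (Psol A B Q R q)" "riccati_map A B Q R q (Psol A B Q R q) = Psol A B Q R q"
    using Psol_solves_mare[of q A B Q R] assms by (auto simp: mare_iff_riccati_map)
  show "pos_semidef (Psol A B Q R p)" "pos_def (Psol A B Q R q)"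
    using p q by (simp_all add: pos_def_imp_pos_semidef)
  show "quad_form (Psol A B Q R p) y \<le> quad_form (riccati_map A B Q R p (Psol A B Q R p)) y" for y
    using p by simp
  show "quad_form (riccati_map A B Q R p (Psol A B Q R q)) y \<le> quad_form (Psol A B Q R q) y" for y
    using riccati_map_mono_param[OF pos_def_imp_pos_semidef[OF q(1)] R \<open>p \<le> q\<close>,
        where A = A and B = B and Q = Q and x = y] q(2)
    by simp
qed (use assms in auto)

section \<open>Eigenvalue inequalities\<close>

lemma inner_matrix_vector_self_le_lambda_max:
  fixes M :: "real^'n::finite^'n"
  assumes M: "pos_semidef M"
  shows "(M *v v) \<bullet> (M *v v) \<le> lambda_max M * quad_form M v"
proof -
  define S where "S = msqrt M"
  have S: "transpose S = S" "S ** S = M"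
    using msqrt[OF M] pos_semidef_symmetric unfolding S_def by auto
  have "(M *v v) \<bullet> (M *v v) = quad_form M (S *v v)"
    using inner_symmetric_matrix[OF S(1), of "S *v v" "S *v (S *v v)"]
    by (simp add: quad_form_def S(2)[symmetric] matrix_vector_mul_assoc[symmetric])
  also have "\<dots> \<le> lambda_max M * ((S *v v) \<bullet> (S *v v))"
    by (rule lambda_max_rayleigh(2)[OF pos_semidef_symmetric[OF M]])
  also have "(S *v v) \<bullet> (S *v v) = quad_form M v"
    using inner_symmetric_matrix[OF S(1), of v "S *v v"]
    by (simp add: quad_form_def S(2)[symmetric] matrix_vector_mul_assoc[symmetric])
  finally show ?thesis .
qed

lemma lambda_min_mult_lambda_max_le:
  fixes B P R :: "real^'n::finite^'n"
  assumes B: "invertible B" and P: "pos_semidef P" and R: "pos_semidef R"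
  shows "lambda_min (B ** transpose B) * lambda_max P \<le> lambda_max (R + transpose B ** P ** B)"
proof -
  define S where "S = R + transpose B ** P ** B"
  define \<mu> where "\<mu> = lambda_min (transpose B ** B)"
  have S: "pos_semidef S"
    unfolding S_def using R P by (simp add: pos_semidef_add pos_semidef_congruence)
  have \<mu>: "lambda_min (B ** transpose B) = \<mu>"
  proof -
    have "is_eigenvalue (B ** transpose B) = is_eigenvalue (transpose B ** B)"
      by (intro ext) (rule is_eigenvalue_mult_commute[OF B])
    then show ?thesis
      by (simp add: \<mu>_def lambda_min_def)
  qed
  obtain v where v: "norm v = 1" "quad_form P v = lambda_max P"
    using lambda_max_rayleigh(1)[OF pos_semidef_symmetric[OF P]] by blast
  define y where "y = matrix_inv B *v v"
  have By: "B *v y = v"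
    unfolding y_def by (rule matrix_vector_mul_matrix_inv[OF B])
  have "lambda_max P \<le> quad_form R y + quad_form P (B *v y)"
    using v By pos_semidef_quad_form_nonneg[OF R] by simp
  also have "\<dots> \<le> lambda_max S * (y \<bullet> y)"
    using lambda_max_rayleigh(2)[OF pos_semidef_symmetric[OF S], of y]
    by (simp add: S_def quad_form_add quad_form_congruence)
  finally have "\<mu> * lambda_max P \<le> lambda_max S * (\<mu> * (y \<bullet> y))"
    using lambda_min_nonneg[OF pos_semidef_transpose_mult_self] mult_left_mono
    unfolding \<mu>_def by (metis mult.left_commute)
  also have "\<dots> \<le> lambda_max S * 1"
  proof (rule mult_left_mono)
    show "\<mu> * (y \<bullet> y) \<le> 1"
      using lambda_min_rayleigh(3)[of "transpose B ** B" y] v By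
      by (simp add: \<mu>_def matrix_transpose_mul quad_form_transpose_mult_self dot_square_norm)
  qed (rule lambda_max_nonneg[OF S])
  finally show ?thesis
    by (simp add: \<mu> S_def)
qed

lemma mult_inner_le_inner_self:
  fixes v z :: "'a::real_inner"
  assumes "0 \<le> l" "l * (v \<bullet> v) \<le> v \<bullet> z"
  shows "l * (v \<bullet> z) \<le> z \<bullet> z"
proof -
  have "2 * l * (v \<bullet> z) \<le> l * (l * (v \<bullet> v)) + z \<bullet> z"
    using inner_ge_zero[of "l *\<^sub>R v - z"]
    by (simp add: inner_diff_left inner_diff_right inner_commute algebra_simps)
  moreover have "l * (l * (v \<bullet> v)) \<le> l * (v \<bullet> z)"
    by (rule mult_left_mono[OF assms(2) assms(1)])
  ultimately show ?thesis
    by linarith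
qed

text \<open>With \<open>\<Xi> = M\<^sup>1\<^sup>/\<^sup>2\<close> and \<open>v = \<Xi>\<^sup>-\<^sup>1 G x\<close> one has \<open>G[x] = v \<bullet> \<Xi> x\<close>, while the
  Rayleigh bound for \<open>\<Xi> G\<^sup>-\<^sup>1 \<Xi>\<close> at \<open>v\<close> gives \<open>\<lambda> |v|\<^sup>2 \<le> G[x]\<close>.\<close>
lemma lambda_min_msqrt_inv_le:
  fixes M G :: "real^'n::finite^'n"
  assumes M: "pos_def M" and G: "pos_def G"
  shows "lambda_min (msqrt M ** matrix_inv G ** msqrt M) * quad_form G x \<le> quad_form M x"
proof -
  define \<Xi> where "\<Xi> = msqrt M"
  define l where "l = lambda_min (\<Xi> ** matrix_inv G ** \<Xi>)"
  define v where "v = matrix_inv \<Xi> *v (G *v x)"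
  have \<Xi>: "transpose \<Xi> = \<Xi>" "\<Xi> ** \<Xi> = M" "invertible \<Xi>"
    using msqrt[OF pos_def_imp_pos_semidef[OF M]] pos_semidef_symmetric invertible_msqrt[OF M]
    unfolding \<Xi>_def by auto
  have Ginv: "invertible G" "transpose (matrix_inv G) = matrix_inv G"
    using G pos_def_invertible pos_def_symmetric symmetric_matrix_inv by auto
  have Tv: "(\<Xi> ** matrix_inv G ** \<Xi>) *v v = \<Xi> *v x"
    by (simp add: v_def matrix_vector_mul_assoc[symmetric] matrix_vector_mul_matrix_inv \<Xi>(3)
        matrix_inv_matrix_vector_mul Ginv(1))
  have Gx: "quad_form G x = v \<bullet> (\<Xi> *v x)"
    using inner_symmetric_matrix[OF symmetric_matrix_inv[OF \<Xi>(3,1)], of "G *v x" "\<Xi> *v x"]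
    by (simp add: quad_form_def v_def matrix_inv_matrix_vector_mul \<Xi>(3) inner_commute)
  have ray: "l * (v \<bullet> v) \<le> quad_form G x"
    using lambda_min_rayleigh(3)[of "\<Xi> ** matrix_inv G ** \<Xi>" v] \<Xi>(1) Ginv(2) Tv Gx
    by (simp add: l_def quad_form_def matrix_transpose_mul matrix_mul_assoc)
  have "l * quad_form G x \<le> quad_form M x"
  proof (cases "0 \<le> l")
    case True
    then show ?thesis
      using mult_inner_le_inner_self[OF True ray[unfolded Gx]]
        quad_form_transpose_mult_self[of \<Xi> x] \<Xi>
      by (simp add: Gx)
  next
    case False
    then show ?thesis
      using pos_semidef_quad_form_nonneg pos_def_imp_pos_semidef M G
      by (meson mult_nonpos_nonneg not_le less_imp_le order_trans)
  qed
  then show ?thesis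
    by (simp add: l_def \<Xi>_def)
qed

lemma lambda_min_msqrt_inv_pos:
  fixes M G :: "real^'n::finite^'n"
  assumes M: "pos_def M" and G: "pos_def G"
  shows "0 < lambda_min (msqrt M ** matrix_inv G ** msqrt M)"
proof -
  have "transpose (msqrt M) = msqrt M"
    using msqrt(1)[OF pos_def_imp_pos_semidef[OF M]] by (rule pos_semidef_symmetric)
  then show ?thesis
    using pos_def_congruence[OF pos_def_matrix_inv[OF G] invertible_msqrt[OF M]]
    by (simp add: lambda_min_pos)
qed

lemma feedback_weight_le:
  fixes B P P0 R :: "real^'n::finite^'n"
  defines "\<Lambda> \<equiv> lambda_max (R + transpose B ** P ** B)"
  assumes B: "invertible B" and R: "pos_def R" and P0: "pos_def P0" and P: "pos_def P"
    and P0_le_P: "\<And>y. quad_form P0 y \<le> quad_form P y"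
  shows "lambda_min R * lambda_min (B ** transpose B) / \<Lambda>\<^sup>2 * ((P0 *v a) \<bullet> (P0 *v a))
           \<le> lambda_min R * quad_form P a / \<Lambda>"
proof -
  define c where "c = lambda_min R * lambda_min (B ** transpose B)"
  have \<Lambda>: "0 < \<Lambda>"
    unfolding \<Lambda>_def
    using lambda_max_pos[OF pos_def_add_congruence[OF R pos_def_imp_pos_semidef[OF P]]] .
  have c: "0 \<le> c"
    unfolding c_def using lambda_min_pos[OF R]
      lambda_min_nonneg[OF pos_semidef_transpose_mult_self[of "transpose B", simplified]] by simp
  have "(P0 *v a) \<bullet> (P0 *v a) \<le> lambda_max P0 * quad_form P0 a"
    by (rule inner_matrix_vector_self_le_lambda_max[OF pos_def_imp_pos_semidef[OF P0]])
  also have "\<dots> \<le> lambda_max P * quad_form P a"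
    using lambda_max_mono[OF pos_def_symmetric[OF P0] pos_def_symmetric[OF P] P0_le_P]
      lambda_max_nonneg[OF pos_def_imp_pos_semidef[OF P0]] P0_le_P[of a]
      pos_semidef_quad_form_nonneg[OF pos_def_imp_pos_semidef[OF P0], of a]
    by (intro mult_mono) auto
  finally have "c * ((P0 *v a) \<bullet> (P0 *v a)) \<le> c * (lambda_max P * quad_form P a)"
    using c by (rule mult_left_mono)
  also have "\<dots> = lambda_min R * (lambda_min (B ** transpose B) * lambda_max P) * quad_form P a"
    by (simp add: c_def)
  also have "\<dots> \<le> lambda_min R * \<Lambda> * quad_form P a"
    using lambda_min_mult_lambda_max_le[OF B pos_def_imp_pos_semidef[OF P]
        pos_def_imp_pos_semidef[OF R]] lambda_min_pos[OF R]
      pos_semidef_quad_form_nonneg[OF pos_def_imp_pos_semidef[OF P], of a]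
    unfolding \<Lambda>_def by (intro mult_right_mono mult_left_mono) auto
  finally have "c * ((P0 *v a) \<bullet> (P0 *v a)) / \<Lambda>\<^sup>2 \<le> lambda_min R * \<Lambda> * quad_form P a / \<Lambda>\<^sup>2"
    by (rule divide_right_mono) simp
  then show ?thesis
    using \<Lambda> by (simp add: c_def power2_eq_square)
qed

section \<open>The stability threshold\<close>

definition threshold_bound ::
    "real^'n::finite^'n \<Rightarrow> real^'n^'n \<Rightarrow> real^'n^'n \<Rightarrow> real^'n^'n \<Rightarrow> real \<Rightarrow> real" where
  "threshold_bound A B Q R q =
     (let P = Psol A B Q R q; P0 = Psol A B Q R 0;
          c2 = lambda_min R * lambda_min (B ** transpose B)
               / (lambda_max (R + transpose B ** P ** B))\<^sup>2;
          Xi = msqrt (Q + ((1 - q) * c2) *\<^sub>R (transpose A ** P0 ** P0 ** A))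
      in lambda_min (Xi ** matrix_inv (transpose A ** P ** A) ** Xi))"

lemma threshold_bound:
  fixes A B Q R :: "real^'n::finite^'n" and q :: real and x :: "real^'n"
  defines "P \<equiv> Psol A B Q R q"
  defines "\<Lambda> \<equiv> lambda_max (R + transpose B ** P ** B)"
  assumes Q: "pos_def Q" and R: "pos_def R" and A: "invertible A" and B: "invertible B"
    and q: "0 \<le> q" "q \<le> 1" "q < q_crit A B Q R"
  shows "0 < threshold_bound A B Q R q"
    and "threshold_bound A B Q R q * quad_form P (A *v x)
           \<le> quad_form Q x + (1 - q) * (lambda_min R * quad_form P (A *v x) / \<Lambda>)"
proof -
  define P0 where "P0 = Psol A B Q R 0"
  define c2 where "c2 = lambda_min R * lambda_min (B ** transpose B) / \<Lambda>\<^sup>2"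
  define M where "M = Q + ((1 - q) * c2) *\<^sub>R (transpose A ** P0 ** P0 ** A)"
  define G where "G = transpose A ** P ** A"
  have bound: "threshold_bound A B Q R q = lambda_min (msqrt M ** matrix_inv G ** msqrt M)"
    by (simp add: threshold_bound_def Let_def M_def G_def c2_def \<Lambda>_def P_def P0_def)
  have P: "pos_def P" and P0: "pos_def P0"
    using Psol_solves_mare(1)[of q A B Q R] Psol_solves_mare(1)[of 0 A B Q R] q
    unfolding P_def P0_def by auto
  have P0_le_P: "quad_form P0 y \<le> quad_form P y" for y
    unfolding P0_def P_def using Psol_mono[OF Q R _ q(1)] q by simp
  have c2: "0 \<le> c2"
    unfolding c2_def using R by (simp add: lambda_min_nonneg pos_def_imp_pos_semidef
        pos_semidef_transpose_mult_self[of "transpose B", simplified])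
  have P0P0: "transpose A ** P0 ** P0 ** A = transpose (P0 ** A) ** (P0 ** A)"
    using pos_def_symmetric[OF P0] by (simp add: matrix_transpose_mul matrix_mul_assoc)
  have M: "pos_def M"
    unfolding M_def P0P0 using Q q c2
    by (simp add: pos_def_add_pos_semidef pos_semidef_scaleR pos_semidef_transpose_mult_self)
  have G: "pos_def G"
    unfolding G_def using pos_def_congruence[OF P A] .
  show "0 < threshold_bound A B Q R q"
    unfolding bound using lambda_min_msqrt_inv_pos[OF M G] .
  have "c2 * ((P0 *v a) \<bullet> (P0 *v a)) \<le> lambda_min R * quad_form P a / \<Lambda>" for a
    unfolding c2_def \<Lambda>_def
    by (rule feedback_weight_le[OF B R P0 P P0_le_P])
  moreover have "threshold_bound A B Q R q * quad_form P (A *v x) \<le> quad_form M x"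
    using lambda_min_msqrt_inv_le[OF M G, of x] by (simp add: bound G_def quad_form_congruence)
  moreover have "quad_form M x
                   = quad_form Q x + (1 - q) * (c2 * ((P0 *v (A *v x)) \<bullet> (P0 *v (A *v x))))"
    unfolding M_def P0P0
    by (simp add: quad_form_add quad_form_scaleR quad_form_transpose_mult_self
        matrix_vector_mul_assoc)
  ultimately show "threshold_bound A B Q R q * quad_form P (A *v x)
                     \<le> quad_form Q x + (1 - q) * (lambda_min R * quad_form P (A *v x) / \<Lambda>)"
    using q(2) by (smt (verit) mult_left_mono)
qed

lemma symmetric_Cmat:
  fixes A B Q R :: "real^'n::finite^'n"
  assumes Q: "transpose Q = Q" and R: "pos_def R" and Ph: "pos_semidef (Psol A B Q R qh)"
  shows "transpose (Cmat A B Q R q qh) = Cmat A B Q R q qh"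
proof -
  define Ph where "Ph = Psol A B Q R qh"
  define Sh where "Sh = R + transpose B ** Ph ** B"
  have "pos_def Sh"
    unfolding Sh_def Ph_def using R Ph by (rule pos_def_add_congruence)
  then have "transpose (matrix_inv Sh) = matrix_inv Sh"
    by (simp add: symmetric_matrix_inv pos_def_invertible pos_def_symmetric)
  then show ?thesis
    using Q pos_def_symmetric[OF R] pos_semidef_symmetric[OF Ph]
    unfolding Cmat_def Kgain_def Let_def Ph_def[symmetric] Sh_def[symmetric]
    by (simp add: transpose_add transpose_diff transpose_scalar transpose_uminus
        matrix_transpose_mul matrix_mul_assoc)
qed

lemma quad_form_Cmat:
  fixes A B Q R :: "real^'n::finite^'n" and qh :: real and x :: "real^'n"
  defines "Ph \<equiv> Psol A B Q R qh"
  defines "Sh \<equiv> R + transpose B ** Ph ** B"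
  defines "k \<equiv> matrix_inv Sh *v (transpose B *v (Ph *v (A *v x)))"
  assumes R: "pos_def R" and Ph: "pos_semidef Ph"
  shows "quad_form (Cmat A B Q R q qh) x
           = quad_form Q x + (1 - q) * quad_form R k - (q - qh) * quad_form Sh k"
proof -
  have Sh: "pos_def Sh"
    unfolding Sh_def using R Ph by (rule pos_def_add_congruence)
  have Kx: "Kgain A B Q R qh *v x = - k"
    unfolding Kgain_def Let_def Ph_def[symmetric] Sh_def[symmetric] k_def
    by (simp only: uminus_matrix_vector_mult matrix_vector_mul_assoc matrix_mul_assoc)
  have "quad_form (transpose A ** Ph ** B ** matrix_inv Sh ** transpose B ** Ph ** A) x
          = quad_form Sh k"
    unfolding quad_form_gain_term[OF pos_semidef_symmetric[OF Ph]] k_def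
    by (rule quad_form_matrix_inv[OF pos_def_invertible[OF Sh] pos_def_symmetric[OF Sh]])
  then show ?thesis
    unfolding Cmat_def Let_def Ph_def[symmetric] Sh_def[symmetric]
    by (simp add: quad_form_add quad_form_diff quad_form_scaleR quad_form_congruence Kx)
qed

lemma feedback_bounds:
  fixes A B Q R :: "real^'n::finite^'n" and q qh :: real and x :: "real^'n"
  defines "P \<equiv> Psol A B Q R q" and "Ph \<equiv> Psol A B Q R qh"
  defines "Sh \<equiv> R + transpose B ** Ph ** B"
  defines "k \<equiv> matrix_inv Sh *v (transpose B *v (Ph *v (A *v x)))"
  assumes Q: "pos_def Q" and R: "pos_def R"
    and qh: "0 \<le> qh" "qh \<le> q" and q: "q < q_crit A B Q R" "q \<le> 1"
  shows "quad_form Sh k \<le> quad_form P (A *v x)"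
    and "lambda_min R * quad_form Sh k \<le> lambda_max (R + transpose B ** P ** B) * quad_form R k"
proof -
  have Ph_le_P: "quad_form Ph y \<le> quad_form P y" for y
    unfolding Ph_def P_def using Psol_mono[OF Q R qh q(1,2)] .
  have P: "pos_def P" and Ph: "pos_def Ph"
    using Psol_solves_mare(1)[of q A B Q R] Psol_solves_mare(1)[of qh A B Q R] qh q
    unfolding P_def Ph_def by auto
  have Sh: "pos_def Sh"
    unfolding Sh_def using pos_def_add_congruence[OF R pos_def_imp_pos_semidef[OF Ph]] .
  have "quad_form Sh k \<le> quad_form Ph (A *v x)"
    using quad_form_matrix_inv[OF pos_def_invertible[OF Sh] pos_def_symmetric[OF Sh]]
      gain_term_le_quad_form[OF pos_def_imp_pos_semidef[OF Ph] R, of B "A *v x"]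
    unfolding k_def Sh_def by simp
  then show "quad_form Sh k \<le> quad_form P (A *v x)"
    using Ph_le_P order_trans by blast
  have "lambda_max Sh \<le> lambda_max (R + transpose B ** P ** B)"
    using Ph_le_P pos_def_symmetric[OF Sh] pos_def_symmetric[OF R] pos_def_symmetric[OF P]
    by (intro lambda_max_mono) (simp_all add: Sh_def quad_form_add quad_form_congruence
        symmetric_add_congruence)
  then have "quad_form Sh k \<le> lambda_max (R + transpose B ** P ** B) * (k \<bullet> k)"
    using lambda_max_rayleigh(2)[OF pos_def_symmetric[OF Sh], of k] mult_right_mono
    by (metis inner_ge_zero order_trans)
  then have "lambda_min R * quad_form Sh k
               \<le> lambda_max (R + transpose B ** P ** B) * (lambda_min R * (k \<bullet> k))"
    using lambda_min_pos[OF R] by (simp add: mult_left_mono mult.left_commute)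
  also have "\<dots> \<le> lambda_max (R + transpose B ** P ** B) * quad_form R k"
    using lambda_min_rayleigh(3)[OF pos_def_symmetric[OF R]]
      lambda_max_pos[OF pos_def_add_congruence[OF R pos_def_imp_pos_semidef[OF P]]]
    by (simp add: mult_left_mono)
  finally show "lambda_min R * quad_form Sh k
                  \<le> lambda_max (R + transpose B ** P ** B) * quad_form R k" .
qed

lemma threshold_inequality:
  fixes Qx r s p \<Lambda> lR l d q :: real
  assumes "0 < Qx" "0 \<le> r" "q \<le> 1" "0 \<le> s" "s \<le> p" "0 < \<Lambda>" "lR * s \<le> \<Lambda> * r"
    and "l * p \<le> Qx + (1 - q) * (lR * p / \<Lambda>)" and "d < l"
  shows "d * s < Qx + (1 - q) * r"
proof (cases "s = 0")
  case False
  then have s: "0 < s" "0 < p"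
    using assms(4,5) by auto
  have "l * s \<le> (s / p) * (Qx + (1 - q) * (lR * p / \<Lambda>))"
    using mult_left_mono[OF assms(8), of "s / p"] s by (simp add: field_simps)
  also have "\<dots> = (s / p) * Qx + (1 - q) * (lR * s / \<Lambda>)"
    using s by (simp add: field_simps)
  also have "\<dots> \<le> Qx + (1 - q) * r"
  proof (rule add_mono)
    show "s / p * Qx \<le> Qx"
      using mult_right_mono[of "s / p" 1 Qx] assms(1,5) s by simp
    show "(1 - q) * (lR * s / \<Lambda>) \<le> (1 - q) * r"
      using assms(3,6,7) by (intro mult_left_mono) (simp_all add: pos_divide_le_eq mult.commute)
  qed
  finally show ?thesis
    using assms(9) s by (smt (verit) mult_strict_right_mono)
next
  case True
  then show ?thesis
    using assms(1-3) by (simp add: add_pos_nonneg)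
qed

lemma quad_form_Cmat_pos:
  fixes A B Q R :: "real^'n::finite^'n"
  assumes Q: "pos_def Q" and R: "pos_def R" and A: "invertible A" and B: "invertible B"
    and q: "0 \<le> q" "q \<le> 1" "q < q_crit A B Q R" and qh: "0 \<le> qh" "qh < q_crit A B Q R"
    and close: "q - qh < threshold_bound A B Q R q" and "x \<noteq> 0"
  shows "0 < quad_form (Cmat A B Q R q qh) x"
proof -
  define P where "P = Psol A B Q R q"
  define Sh where "Sh = R + transpose B ** Psol A B Q R qh ** B"
  define k where "k = matrix_inv Sh *v (transpose B *v (Psol A B Q R qh *v (A *v x)))"
  have Ph: "pos_semidef (Psol A B Q R qh)"
    using Psol_solves_mare(1)[OF qh] by (rule pos_def_imp_pos_semidef)
  have Qx: "0 < quad_form Q x"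
    using pos_def_quad_form_pos[OF Q \<open>x \<noteq> 0\<close>] .
  have Rk: "0 \<le> quad_form R k" and Shk: "0 \<le> quad_form Sh k"
    using pos_def_imp_pos_semidef[OF R] Ph unfolding Sh_def
    by (simp_all add: pos_semidef_quad_form_nonneg pos_semidef_add pos_semidef_congruence)
  have "(q - qh) * quad_form Sh k < quad_form Q x + (1 - q) * quad_form R k"
  proof (cases "qh \<le> q")
    case True
    show ?thesis
    proof (rule threshold_inequality[OF Qx Rk q(2) Shk _ _ _ _ close])
      show "quad_form Sh k \<le> quad_form P (A *v x)"
        "lambda_min R * quad_form Sh k \<le> lambda_max (R + transpose B ** P ** B) * quad_form R k"
        using feedback_bounds[OF Q R qh(1) True q(3,2)] unfolding P_def Sh_def k_def by auto
      show "0 < lambda_max (R + transpose B ** P ** B)"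
        using Psol_solves_mare(1)[OF q(1,3)] unfolding P_def
        by (intro lambda_max_pos pos_def_add_congruence[OF R] pos_def_imp_pos_semidef)
      show "threshold_bound A B Q R q * quad_form P (A *v x)
              \<le> quad_form Q x + (1 - q) * (lambda_min R * quad_form P (A *v x)
                   / lambda_max (R + transpose B ** P ** B))"
        unfolding P_def by (rule threshold_bound(2)[OF Q R A B q])
    qed
  next
    case False
    then show ?thesis
      using Qx Rk Shk q(2) by (smt (verit) mult_nonneg_nonneg mult_nonpos_nonneg)
  qed
  then show ?thesis
    unfolding quad_form_Cmat[OF R Ph] Sh_def k_def by simp
qed

lemma Cmat_pos_def:
  fixes A B Q R :: "real^'n::finite^'n"
  assumes Q: "pos_def Q" and R: "pos_def R" and A: "invertible A" and B: "invertible B"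
    and q: "0 \<le> q" "q \<le> 1" "q < q_crit A B Q R" and qh: "0 \<le> qh" "qh < q_crit A B Q R"
    and close: "q - qh < threshold_bound A B Q R q"
  shows "pos_def (Cmat A B Q R q qh)"
  using symmetric_Cmat[OF pos_def_symmetric[OF Q] R
      pos_def_imp_pos_semidef[OF Psol_solves_mare(1)[OF qh]]]
    quad_form_Cmat_pos[OF assms]
  by (simp add: pos_def_iff_quad_form)

lemma ereal_le_delta_bar:
  assumes "0 \<le> d"
    and "\<And>qh. 0 \<le> qh \<Longrightarrow> qh < q_crit A B Q R \<Longrightarrow> q - qh < d \<Longrightarrow> pos_def (Cmat A B Q R q qh)"
  shows "ereal d \<le> delta_bar A B Q R q"
  unfolding delta_bar_def using assms by (intro Sup_upper) blast

theorem theorem5: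
  fixes A Q R B :: "real ^ 'n::finite ^ 'n" and q :: real
  assumes "stabilizable A B"
    and "pos_def Q" and "pos_def R"
    and "0 < q" and "q < 1"
    and "q < q_crit A B Q R"
    and "invertible B" and "invertible A"
  shows "ereal (let P = Psol A B Q R q; P0 = Psol A B Q R 0;
                    c2 = lambda_min R * lambda_min (B ** transpose B)
                         / (lambda_max (R + transpose B ** P ** B))\<^sup>2;
                    Xi = msqrt (Q + ((1 - q) * c2) *\<^sub>R (transpose A ** P0 ** P0 ** A))
                in lambda_min (Xi ** matrix_inv (transpose A ** P ** A) ** Xi))
         \<le> delta_bar A B Q R q"
proof -
  have q: "0 \<le> q" "q \<le> 1" "q < q_crit A B Q R"
    using assms(4-6) by auto
  have "ereal (threshold_bound A B Q R q) \<le> delta_bar A B Q R q"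
  proof (rule ereal_le_delta_bar)
    show "0 \<le> threshold_bound A B Q R q"
      using threshold_bound(1)[OF assms(2,3,8,7) q] by simp
    show "pos_def (Cmat A B Q R q qh)"
      if "0 \<le> qh" "qh < q_crit A B Q R" "q - qh < threshold_bound A B Q R q" for qh
      using Cmat_pos_def[OF assms(2,3,8,7) q that] .
  qed
  then show ?thesis
    by (simp only: threshold_bound_def)
qed

end
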